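(* Let $(\Omega_X,\mathcal{F}_X)$ and $(\Omega_y,\mathcal{F}_y)$ be measurable spaces and $\pi$ a probability measure on $(\Omega_X\times\Omega_y,\mathcal{F}_X\otimes\mathcal{F}_y)$. Let $s:\Omega_X\times\Omega_y\to\mathbb{R}$ be a measurable score function, $N\ge1$, $\alpha\in[0,1]$, and let $(X_1,y_1),\dots,(X_N,y_N),(X,y)$ be i.i.d. with law $\pi$. Let $\hat q$ be the $\lceil(1-\alpha)(N+1)\rceil$-th smallest value among $s(X_1,y_1),\dots,s(X_N,y_N)$ (with $\hat q=+\infty$ if $\lceil(1-\alpha)(N+1)\rceil>N$), and let $S(x)=\{y'\in\Omega_y:s(x,y')\le\hat q\}$. Let $\mathrm{MI}_{Xs}$ denote the mutual information between $X$ and $s(X,y)$ for $(X,y)\sim\pi$, and assume $0<\mathrm{MI}_{Xs}<\infty$. Then for every $\omega_X\in\mathcal{F}_X$ with $\mathbb{P}(X\in\omega_X)>0$, $$\mathbb{P}\big(y\in S(X)\,\big|\,X\in\omega_X\big)\ge(1-\alpha)-\frac{\sqrt{1-\exp(-\mathrm{MI}_{Xs})}}{\mathbb{P}(X\in\omega_X)},$$ the probability being taken jointly over the calibration data and the test point.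
   Context: Split-conformal setting: any model entering $s$ is fixed and independent of the calibration and test data; calibration points and test point are i.i.d. from $\pi$; coverage probabilities are marginalized over the calibration data. *)

theory Defs
  imports "HOL-Probability.Probability"
begin

definition conf_rank :: "real \<Rightarrow> nat \<Rightarrow> nat" where
  "conf_rank \<alpha> N = nat \<lceil>(1 - \<alpha>) * (real N + 1)\<rceil>"

definition conf_qhat :: "('a \<times> 'b \<Rightarrow> real) \<Rightarrow> real \<Rightarrow> nat \<Rightarrow> (nat \<Rightarrow> 'a \<times> 'b) \<Rightarrow> ereal" where
  "conf_qhat s \<alpha> N D =
     (let k = conf_rank \<alpha> N in
      if k = 0 then -\<infinity>
      else if N < k then \<infinity>
      else ereal (sort (map (\<lambda>i. s (D i)) [0..<N]) ! (k - 1)))"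

definition conf_set ::
  "'b measure \<Rightarrow> ('a \<times> 'b \<Rightarrow> real) \<Rightarrow> real \<Rightarrow> nat \<Rightarrow> (nat \<Rightarrow> 'a \<times> 'b) \<Rightarrow> 'a \<Rightarrow> 'b set" where
  "conf_set MY s \<alpha> N D x = {y' \<in> space MY. ereal (s (x, y')) \<le> conf_qhat s \<alpha> N D}"

end

theory Submission
  imports Defs "HOL-Combinatorics.Transposition"
begin

text \<open>
  Fix the calibration data \<open>D\<close>. Then the test point is covered iff its score \<open>s(X, y)\<close> lies in
  the Borel set \<open>{r. r \<le> q(D)}\<close>, an event about the score alone. For such events
  \<open>P(X \<in> \<omega>, s \<in> T)\<close> differs from \<open>P(X \<in> \<omega>) P(s \<in> T)\<close> by at most the total variation distance
  between the joint law of \<open>(X, s)\<close> and the product of its marginals, which the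
  Bretagnolle--Huber inequality bounds by \<open>sqrt (1 - exp (- MI))\<close>. Integrating over \<open>D\<close> and
  using the marginal split-conformal guarantee \<open>P(y \<in> S(X)) \<ge> 1 - \<alpha>\<close>, which holds because
  the \<open>N + 1\<close> scores are exchangeable, gives
  \<open>P(X \<in> \<omega>, y \<in> S(X)) \<ge> P(X \<in> \<omega>) (1 - \<alpha>) - sqrt (1 - exp (- MI))\<close>.
\<close>

section \<open>The Bretagnolle--Huber inequality\<close>

lemma sqrt_ge_exp_tangent:
  fixes y c :: real
  assumes "0 \<le> y"
  shows "exp c * (y * (1 - c) - y * ln y / 2) \<le> sqrt y"
proof (cases "y = 0")
  case False
  with assms have y: "0 < y" by simp
  \<comment> \<open>\<open>sqrt y = y * exp (- ln y / 2)\<close>, and \<open>exp\<close> lies above its tangent at \<open>c\<close>\<close>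
  have "1 - c - ln y / 2 \<le> exp (- ln y / 2 - c)"
    using exp_ge_add_one_self[of "- ln y / 2 - c"] by linarith
  then have "exp c * (1 - c - ln y / 2) \<le> exp c * exp (- ln y / 2 - c)"
    by (intro mult_left_mono) auto
  also have "\<dots> = exp (- ln y / 2)"
    by (simp flip: exp_add)
  finally have "y * (exp c * (1 - c - ln y / 2)) \<le> y * exp (- ln y / 2)"
    using y by (intro mult_left_mono) auto
  also have "y * exp (- ln y / 2) = sqrt y"
    using y by (simp add: powr_half_sqrt[symmetric] powr_def exp_minus field_simps flip: exp_add)
  finally show ?thesis
    by (simp add: algebra_simps)
qed simp

lemma sqrt_le_one_plus:
  fixes y :: real
  assumes "0 \<le> y"
  shows "sqrt y \<le> 1 + y"
proof -
  have "2 * sqrt y * 1 \<le> (sqrt y)\<^sup>2 + 1\<^sup>2"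
    by (rule sum_squares_bound)
  then show ?thesis
    using assms real_sqrt_ge_zero[OF assms] by simp
qed

lemma sqrt_mult_add_sqrt_mult_le:
  fixes a b :: real
  assumes "0 \<le> a" "a \<le> 1" "0 \<le> b" "b \<le> 1"
  shows "(sqrt (a * b) + sqrt ((1 - a) * (1 - b)))\<^sup>2 \<le> 1 - (a - b)\<^sup>2"
proof -
  define x y where "x = sqrt (a * (1 - a))" and "y = sqrt (b * (1 - b))"
  have x2: "x\<^sup>2 = a * (1 - a)" and y2: "y\<^sup>2 = b * (1 - b)"
    using assms by (simp_all add: x_def y_def)
  have sq: "(sqrt (a * b))\<^sup>2 = a * b" "(sqrt ((1 - a) * (1 - b)))\<^sup>2 = (1 - a) * (1 - b)"
    using assms by simp_all
  have "sqrt (a * b) * sqrt ((1 - a) * (1 - b)) = x * y"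
    unfolding x_def y_def real_sqrt_mult[symmetric] by (simp only: mult_ac)
  then have "(sqrt (a * b) + sqrt ((1 - a) * (1 - b)))\<^sup>2 = a * b + (1 - a) * (1 - b) + 2 * (x * y)"
    unfolding power2_sum sq by simp
  also have "\<dots> \<le> a * b + (1 - a) * (1 - b) + (a * (1 - a) + b * (1 - b))"
    using sum_squares_bound[of x y] x2 y2 by simp
  also have "\<dots> = 1 - (a - b)\<^sup>2"
    by (simp add: power2_eq_square algebra_simps)
  finally show ?thesis .
qed

lemma Cauchy_Schwarz_integral:
  fixes f g :: "'a \<Rightarrow> real"
  assumes f: "f \<in> borel_measurable M" "\<And>x. 0 \<le> f x" "integrable M (\<lambda>x. (f x)\<^sup>2)"
    and g: "g \<in> borel_measurable M" "\<And>x. 0 \<le> g x" "integrable M (\<lambda>x. (g x)\<^sup>2)"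
  shows "(\<integral>x. f x * g x \<partial>M) \<le> sqrt (\<integral>x. (f x)\<^sup>2 \<partial>M) * sqrt (\<integral>x. (g x)\<^sup>2 \<partial>M)"
proof -
  have fg: "integrable M (\<lambda>x. f x * g x)"
  proof (rule Bochner_Integration.integrable_bound)
    show "integrable M (\<lambda>x. (f x)\<^sup>2 + (g x)\<^sup>2)"
      using f g by simp
    show "AE x in M. norm (f x * g x) \<le> norm ((f x)\<^sup>2 + (g x)\<^sup>2)"
    proof (intro AE_I2)
      fix x
      have "2 * f x * g x \<le> (f x)\<^sup>2 + (g x)\<^sup>2"
        by (rule sum_squares_bound)
      then show "norm (f x * g x) \<le> norm ((f x)\<^sup>2 + (g x)\<^sup>2)"
        using mult_nonneg_nonneg[OF f(2) g(2), of x x] by simp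
    qed
  qed (use f g in simp)
  have nn: "(\<integral>\<^sup>+x. ennreal (h x) \<partial>M) = ennreal (\<integral>x. h x \<partial>M)"
    if "integrable M h" "\<And>x. 0 \<le> h x" for h
    using that by (intro nn_integral_eq_integral) auto
  have "(\<integral>\<^sup>+x. ennreal (f x) * ennreal (g x) \<partial>M) = (\<integral>\<^sup>+x. ennreal (f x * g x) \<partial>M)"
    using f(2) g(2) by (simp add: ennreal_mult)
  also have "\<dots> = ennreal (\<integral>x. f x * g x \<partial>M)"
    using fg f(2) g(2) by (intro nn) auto
  finally have "(\<integral>\<^sup>+x. ennreal (f x) * ennreal (g x) \<partial>M) = ennreal (\<integral>x. f x * g x \<partial>M)" .
  moreover have "(\<integral>\<^sup>+x. ennreal (h x) ^ 2 \<partial>M) = ennreal (\<integral>x. (h x)\<^sup>2 \<partial>M)"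
    if "integrable M (\<lambda>x. (h x)\<^sup>2)" "\<And>x. 0 \<le> h x" for h
    using that by (simp add: ennreal_power nn)
  moreover have "(\<integral>\<^sup>+x. ennreal (f x) * ennreal (g x) \<partial>M)\<^sup>2
      \<le> (\<integral>\<^sup>+x. ennreal (f x) ^ 2 \<partial>M) * (\<integral>\<^sup>+x. ennreal (g x) ^ 2 \<partial>M)"
    using f g by (intro Cauchy_Schwarz_nn_integral) auto
  ultimately have "ennreal (\<integral>x. f x * g x \<partial>M) ^ 2
      \<le> ennreal (\<integral>x. (f x)\<^sup>2 \<partial>M) * ennreal (\<integral>x. (g x)\<^sup>2 \<partial>M)"
    using f g by simp
  then have "ennreal ((\<integral>x. f x * g x \<partial>M)\<^sup>2) \<le> ennreal ((\<integral>x. (f x)\<^sup>2 \<partial>M) * (\<integral>x. (g x)\<^sup>2 \<partial>M))"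
    using f(2) g(2) by (simp add: ennreal_power integral_nonneg ennreal_mult mult_nonneg_nonneg)
  then have "(\<integral>x. f x * g x \<partial>M)\<^sup>2 \<le> (\<integral>x. (f x)\<^sup>2 \<partial>M) * (\<integral>x. (g x)\<^sup>2 \<partial>M)"
    by (simp add: ennreal_le_iff integral_nonneg)
  then show ?thesis
    by (metis abs_le_D1 real_sqrt_abs real_sqrt_le_mono real_sqrt_mult)
qed

lemma (in finite_measure) integrable_sqrt:
  fixes r :: "'a \<Rightarrow> real"
  assumes "integrable M r" "\<And>x. 0 \<le> r x"
  shows "integrable M (\<lambda>x. sqrt (r x))"
proof (rule Bochner_Integration.integrable_bound)
  show "integrable M (\<lambda>x. 1 + r x)"
    using assms by simp
  show "AE x in M. norm (sqrt (r x)) \<le> norm (1 + r x)"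
    using assms(2) sqrt_le_one_plus by (intro AE_I2) (simp add: add_nonneg_nonneg)
qed (use assms in simp)

lemma (in prob_space) exp_neg_half_le_integral_sqrt:
  fixes r :: "'a \<Rightarrow> real"
  assumes r: "integrable M r" "\<And>x. 0 \<le> r x" "(\<integral>x. r x \<partial>M) = 1"
    and rl: "integrable M (\<lambda>x. r x * ln (r x))"
  shows "exp (- (\<integral>x. r x * ln (r x) \<partial>M) / 2) \<le> (\<integral>x. sqrt (r x) \<partial>M)"
proof -
  define c where "c = - (\<integral>x. r x * ln (r x) \<partial>M) / 2"
  have "exp c = exp c * ((\<integral>x. r x \<partial>M) * (1 - c) - (\<integral>x. r x * ln (r x) \<partial>M) / 2)"
    using r(3) by (simp add: c_def)
  also have "\<dots> = (\<integral>x. exp c * (r x * (1 - c) - r x * ln (r x) / 2) \<partial>M)"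
    using r(1) rl by simp
  also have "\<dots> \<le> (\<integral>x. sqrt (r x) \<partial>M)"
    using r rl sqrt_ge_exp_tangent integrable_sqrt by (intro integral_mono) auto
  finally show ?thesis
    by (simp add: c_def)
qed

lemma (in prob_space) integral_sqrt_le_sqrt_mult_add_sqrt_mult:
  fixes r :: "'a \<Rightarrow> real"
  assumes r: "integrable M r" "\<And>x. 0 \<le> r x" "(\<integral>x. r x \<partial>M) = 1" and B: "B \<in> events"
  defines "a \<equiv> \<integral>x. r x * indicator B x \<partial>M"
  shows "(\<integral>x. sqrt (r x) \<partial>M) \<le> sqrt (a * prob B) + sqrt ((1 - a) * (1 - prob B))"
proof -
  have part: "(\<integral>x. sqrt (r x) * indicator C x \<partial>M) \<le> sqrt ((\<integral>x. r x * indicator C x \<partial>M) * prob C)"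
    if C: "C \<in> events" for C
  proof -
    have sq: "(sqrt (r x) * indicator C x)\<^sup>2 = r x * indicator C x" "(indicator C x :: real)\<^sup>2 = indicator C x"
      for x
      using r(2)[of x] by (auto simp: indicator_def)
    have "(\<integral>x. sqrt (r x) * indicator C x \<partial>M) = (\<integral>x. (sqrt (r x) * indicator C x) * indicator C x \<partial>M)"
      by (intro Bochner_Integration.integral_cong) (auto simp: indicator_def)
    also have "\<dots> \<le> sqrt (\<integral>x. (sqrt (r x) * indicator C x)\<^sup>2 \<partial>M) * sqrt (\<integral>x. (indicator C x)\<^sup>2 \<partial>M)"
      by (rule Cauchy_Schwarz_integral) (use r C in \<open>auto simp: sq emeasure_eq_measure intro: integrable_real_mult_indicator\<close>)
    finally show ?thesis
      using C by (simp add: sq real_sqrt_mult)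
  qed
  have compl: "indicator (space M - B) x = 1 - (indicator B x :: real)" if "x \<in> space M" for x
    using that by (simp add: indicator_def)
  have r_compl: "(\<integral>x. r x * indicator (space M - B) x \<partial>M) = 1 - a"
  proof -
    have "(\<integral>x. r x * indicator (space M - B) x \<partial>M) = (\<integral>x. r x - r x * indicator B x \<partial>M)"
      by (intro Bochner_Integration.integral_cong) (auto simp: compl algebra_simps)
    then show ?thesis
      using B r by (simp add: a_def integrable_real_mult_indicator)
  qed
  have "(\<integral>x. sqrt (r x) \<partial>M)
      = (\<integral>x. sqrt (r x) * indicator B x + sqrt (r x) * indicator (space M - B) x \<partial>M)"
    by (intro Bochner_Integration.integral_cong) (auto simp: compl algebra_simps)
  also have "\<dots> = (\<integral>x. sqrt (r x) * indicator B x \<partial>M) + (\<integral>x. sqrt (r x) * indicator (space M - B) x \<partial>M)"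
    using B r integrable_sqrt by (intro Bochner_Integration.integral_add integrable_real_mult_indicator) auto
  also have "\<dots> \<le> sqrt (a * prob B) + sqrt ((1 - a) * (1 - prob B))"
    using part[OF B] part[of "space M - B"] B r_compl by (intro add_mono) (simp_all add: a_def prob_compl)
  finally show ?thesis .
qed

lemma Bretagnolle_Huber_inequality:
  fixes P Q :: "'a measure" and B :: "'a set"
  assumes "prob_space P" "prob_space Q" and sets_eq: "sets P = sets Q"
    and ac: "absolutely_continuous Q P" and int: "integrable P (entropy_density (exp 1) Q P)"
    and B: "B \<in> sets Q"
  shows "\<bar>measure Q B - measure P B\<bar> \<le> sqrt (1 - exp (- KL_divergence (exp 1) Q P))"
proof -
  interpret P: prob_space P by fact
  interpret Q: prob_space Q by fact
  define r where "r x = enn2real (RN_deriv Q P x)" for x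
  have r_nonneg: "\<And>x. 0 \<le> r x"
    by (simp add: r_def)
  have change: "integrable P f \<longleftrightarrow> integrable Q (\<lambda>x. r x * f x)" "(\<integral>x. f x \<partial>P) = (\<integral>x. r x * f x \<partial>Q)"
    if "f \<in> borel_measurable Q" for f
    unfolding r_def using P.sigma_finite_measure_axioms ac sets_eq that
    by (simp_all add: Q.RN_deriv_integrable Q.RN_deriv_integral)
  have r_int: "integrable Q r" "(\<integral>x. r x \<partial>Q) = 1"
    using change[of "\<lambda>_. 1"] by (simp_all add: P.prob_space)
  have entropy_density: "entropy_density (exp 1) Q P = (\<lambda>x. ln (r x))"
    by (simp add: entropy_density_def r_def log_def fun_eq_iff)
  define K where "K = KL_divergence (exp 1) Q P"
  have K: "integrable Q (\<lambda>x. r x * ln (r x))" "K = (\<integral>x. r x * ln (r x) \<partial>Q)"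
    using int change[of "\<lambda>x. ln (r x)"]
    by (simp_all add: K_def KL_divergence_def entropy_density r_def)
  define a b where "a = measure P B" and "b = measure Q B"
  have a: "a = (\<integral>x. r x * indicator B x \<partial>Q)"
    using change[of "indicator B"] B sets_eq by (simp add: a_def Int_absorb2 sets.sets_into_space)
  \<comment> \<open>the Hellinger affinity \<open>\<integral> sqrt r dQ\<close> lies between \<open>exp (- K / 2)\<close> (Jensen) and the
    Cauchy--Schwarz bound on \<open>B\<close> and its complement\<close>
  have "exp (- K / 2) \<le> (\<integral>x. sqrt (r x) \<partial>Q)"
    using Q.exp_neg_half_le_integral_sqrt[OF r_int(1) r_nonneg r_int(2) K(1)] by (simp add: K(2))
  also have "\<dots> \<le> sqrt (a * b) + sqrt ((1 - a) * (1 - b))"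
    unfolding a b_def using B by (intro Q.integral_sqrt_le_sqrt_mult_add_sqrt_mult r_int r_nonneg) auto
  finally have affinity: "exp (- K / 2) \<le> sqrt (a * b) + sqrt ((1 - a) * (1 - b))" .
  have "exp (- K) = (exp (- K / 2))\<^sup>2"
    by (simp add: power2_eq_square flip: exp_add)
  also have "\<dots> \<le> (sqrt (a * b) + sqrt ((1 - a) * (1 - b)))\<^sup>2"
    using affinity by (intro power_mono) auto
  also have "\<dots> \<le> 1 - (a - b)\<^sup>2"
    by (rule sqrt_mult_add_sqrt_mult_le) (simp_all add: a_def b_def)
  finally have "(b - a)\<^sup>2 \<le> 1 - exp (- K)"
    by (simp add: power2_commute)
  then show ?thesis
    unfolding a_def b_def K_def by (metis real_sqrt_abs real_sqrt_le_mono)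
qed

lemma (in prob_space) abs_prob_inter_diff_le_mutual_information:
  assumes X: "X \<in> measurable M S" and Y: "Y \<in> measurable M T"
    and ac: "absolutely_continuous (distr M S X \<Otimes>\<^sub>M distr M T Y) (distr M (S \<Otimes>\<^sub>M T) (\<lambda>x. (X x, Y x)))"
    and int: "integrable (distr M (S \<Otimes>\<^sub>M T) (\<lambda>x. (X x, Y x)))
       (entropy_density (exp 1) (distr M S X \<Otimes>\<^sub>M distr M T Y) (distr M (S \<Otimes>\<^sub>M T) (\<lambda>x. (X x, Y x))))"
    and A: "A \<in> sets S" and B: "B \<in> sets T"
  shows "\<bar>prob {x \<in> space M. X x \<in> A} * prob {x \<in> space M. Y x \<in> B} - prob {x \<in> space M. X x \<in> A \<and> Y x \<in> B}\<bar>
    \<le> sqrt (1 - exp (- mutual_information (exp 1) S T X Y))"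
proof -
  interpret PX: prob_space "distr M S X"
    using X by (rule prob_space_distr)
  interpret PY: prob_space "distr M T Y"
    using Y by (rule prob_space_distr)
  interpret PXY: pair_prob_space "distr M S X" "distr M T Y" ..
  have XY: "(\<lambda>x. (X x, Y x)) \<in> measurable M (S \<Otimes>\<^sub>M T)"
    using X Y by measurable
  have "emeasure (distr M S X \<Otimes>\<^sub>M distr M T Y) (A \<times> B) = emeasure (distr M S X) A * emeasure (distr M T Y) B"
    using A B by (intro PY.emeasure_pair_measure_Times) auto
  then have "measure (distr M S X \<Otimes>\<^sub>M distr M T Y) (A \<times> B) = measure (distr M S X) A * measure (distr M T Y) B"
    by (simp add: measure_def enn2real_mult)
  also have "\<dots> = prob {x \<in> space M. X x \<in> A} * prob {x \<in> space M. Y x \<in> B}"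
    using X Y A B by (simp add: measure_distr vimage_def Int_def conj_commute)
  finally have product: "measure (distr M S X \<Otimes>\<^sub>M distr M T Y) (A \<times> B)
      = prob {x \<in> space M. X x \<in> A} * prob {x \<in> space M. Y x \<in> B}" .
  have joint: "measure (distr M (S \<Otimes>\<^sub>M T) (\<lambda>x. (X x, Y x))) (A \<times> B) = prob {x \<in> space M. X x \<in> A \<and> Y x \<in> B}"
    using XY A B by (simp add: measure_distr vimage_def Int_def conj_commute)
  have "\<bar>measure (distr M S X \<Otimes>\<^sub>M distr M T Y) (A \<times> B) - measure (distr M (S \<Otimes>\<^sub>M T) (\<lambda>x. (X x, Y x))) (A \<times> B)\<bar>
      \<le> sqrt (1 - exp (- mutual_information (exp 1) S T X Y))"
    unfolding mutual_information_def using XY ac int A B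
    by (intro Bretagnolle_Huber_inequality PXY.prob_space_axioms prob_space_distr)
      (auto cong: sets_pair_measure_cong)
  then show ?thesis
    unfolding product joint .
qed

section \<open>Ranks and the conformal quantile\<close>

definition count_less :: "('i \<Rightarrow> real) \<Rightarrow> 'i set \<Rightarrow> real \<Rightarrow> nat" where
  "count_less u I r = card {i \<in> I. u i < r}"

lemma count_less_comp_bij:
  assumes "bij_betw \<tau> I I"
  shows "count_less (u \<circ> \<tau>) I r = count_less u I r"
proof -
  have "bij_betw \<tau> {i \<in> I. u (\<tau> i) < r} {i \<in> I. u i < r}"
    using assms by (auto simp: bij_betw_def inj_on_def image_iff)
  then show ?thesis
    unfolding count_less_def comp_def by (rule bij_betw_same_card)
qed

lemma pred_count_less:
  fixes f :: "'a \<Rightarrow> 'i \<Rightarrow> real"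
  assumes "finite I" "\<And>i. i \<in> I \<Longrightarrow> (\<lambda>x. f x i) \<in> borel_measurable M" "g \<in> borel_measurable M"
  shows "Measurable.pred M (\<lambda>x. count_less (f x) I (g x) < k)"
proof -
  have "real (count_less (f x) I (g x)) = (\<Sum>i\<in>I. if f x i < g x then 1 else 0)" for x
    using sum_of_bool_eq[OF assms(1), of "\<lambda>i. f x i < g x", where 'a=real] assms(1) by (simp add: count_less_def Int_def of_bool_def conj_commute)
  then have "(\<lambda>x. count_less (f x) I (g x) < k) = (\<lambda>x. (\<Sum>i\<in>I. if f x i < g x then 1 else 0) < real k)"
    by (metis of_nat_less_iff)
  then show ?thesis
    using assms by simp
qed

lemma card_count_less_rank_ge:
  fixes u :: "'i \<Rightarrow> real"
  assumes "finite I" "k \<le> card I"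
  shows "k \<le> card {j \<in> I. count_less u I (u j) < k}"
  using assms
proof (induction "card I" arbitrary: I)
  case 0
  then show ?case by simp
next
  case (Suc n)
  have "I \<noteq> {}"
    using Suc.hyps(2) by auto
  then obtain a where a: "a \<in> I" "Max (u ` I) = u a"
    using obtains_MAX[OF Suc.prems(1)] by blast
  then have a_max: "u j \<le> u a" if "j \<in> I" for j
    using Suc.prems(1) that by (metis Max_ge finite_imageI imageI)
  show ?case
  proof (cases "k \<le> n")
    case True
    \<comment> \<open>a maximiser of \<open>u\<close> does not change the counts of the others\<close>
    have "{j \<in> I - {a}. count_less u (I - {a}) (u j) < k} \<subseteq> {j \<in> I. count_less u I (u j) < k}"
    proof clarify
      fix j assume j: "j \<in> I" "j \<noteq> a" "count_less u (I - {a}) (u j) < k"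
      have "{i \<in> I. u i < u j} = {i \<in> I - {a}. u i < u j}"
        using a_max[OF j(1)] by auto
      then show "count_less u I (u j) < k"
        using j(3) by (simp add: count_less_def)
    qed
    then have "card {j \<in> I - {a}. count_less u (I - {a}) (u j) < k} \<le> card {j \<in> I. count_less u I (u j) < k}"
      using Suc.prems(1) by (intro card_mono) auto
    moreover have "k \<le> card {j \<in> I - {a}. count_less u (I - {a}) (u j) < k}"
      using Suc True a(1) by (intro Suc.hyps(1)) auto
    ultimately show ?thesis by simp
  next
    case False
    then have k: "k = card I"
      using Suc by simp
    have "count_less u I (u j) < k" if "j \<in> I" for j
    proof -
      have "{i \<in> I. u i < u j} \<subseteq> I - {j}"
        by auto
      then have "card {i \<in> I. u i < u j} \<le> card (I - {j})"
        using Suc.prems(1) by (intro card_mono) auto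
      also have "\<dots> < card I"
        using that Suc.prems(1) by (rule card_Diff1_less[rotated])
      finally show ?thesis
        by (simp add: count_less_def k)
    qed
    then have "{j \<in> I. count_less u I (u j) < k} = I"
      by auto
    then show ?thesis
      using k by simp
  qed
qed

lemma le_sorted_nth_iff:
  fixes ys :: "real list"
  assumes "sorted ys" "1 \<le> k" "k \<le> length ys"
  shows "r \<le> ys ! (k - 1) \<longleftrightarrow> card {i. i < length ys \<and> ys ! i < r} < k"
proof
  assume r: "r \<le> ys ! (k - 1)"
  have "{i. i < length ys \<and> ys ! i < r} \<subseteq> {..<k - 1}"
  proof clarify
    fix i assume i: "i < length ys" "ys ! i < r"
    show "i < k - 1"
    proof (rule ccontr)
      assume "\<not> i < k - 1"
      then have "ys ! (k - 1) \<le> ys ! i"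
        using assms(1) i(1) by (intro sorted_nth_mono) auto
      with r i(2) show False by simp
    qed
  qed
  then have "card {i. i < length ys \<and> ys ! i < r} \<le> k - 1"
    using card_mono[of "{..<k - 1}"] by fastforce
  then show "card {i. i < length ys \<and> ys ! i < r} < k"
    using assms(2) by simp
next
  assume card: "card {i. i < length ys \<and> ys ! i < r} < k"
  show "r \<le> ys ! (k - 1)"
  proof (rule ccontr)
    assume "\<not> r \<le> ys ! (k - 1)"
    moreover have "ys ! i \<le> ys ! (k - 1)" if "i < k" for i
      using assms that by (intro sorted_nth_mono) auto
    ultimately have "i < length ys \<and> ys ! i < r" if "i < k" for i
      using assms(3) that by fastforce
    then have "{..<k} \<subseteq> {i. i < length ys \<and> ys ! i < r}"
      by auto
    then have "k \<le> card {i. i < length ys \<and> ys ! i < r}"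
      using card_mono[of "{i. i < length ys \<and> ys ! i < r}" "{..<k}"] by simp
    with card show False by simp
  qed
qed

lemma le_conf_qhat_iff:
  "ereal r \<le> conf_qhat s \<alpha> N D \<longleftrightarrow> count_less (s \<circ> D) {..<N} r < conf_rank \<alpha> N"
proof -
  define k xs where "k = conf_rank \<alpha> N" and "xs = map (\<lambda>i. s (D i)) [0..<N]"
  have count_le: "count_less (s \<circ> D) {..<N} r \<le> N"
    unfolding count_less_def using card_mono[of "{..<N}" "{i \<in> {..<N}. (s \<circ> D) i < r}"] by auto
  have "r \<le> sort xs ! (k - 1) \<longleftrightarrow> count_less (s \<circ> D) {..<N} r < k" if "1 \<le> k" "k \<le> N"
  proof -
    have "card {i. i < length (sort xs) \<and> sort xs ! i < r} = length (filter (\<lambda>v. v < r) (sort xs))"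
      by (simp add: length_filter_conv_card)
    also have "\<dots> = length (filter (\<lambda>v. v < r) xs)"
      by (metis mset_filter mset_sort size_mset)
    also have "\<dots> = count_less (s \<circ> D) {..<N} r"
      unfolding length_filter_conv_card count_less_def xs_def by (intro arg_cong[where f = card]) auto
    finally show ?thesis
      using that le_sorted_nth_iff[of "sort xs" k r] by (simp add: xs_def)
  qed
  then show ?thesis
    using count_le by (cases "k = 0 \<or> N < k") (auto simp: conf_qhat_def k_def xs_def Let_def)
qed

section \<open>Split-conformal coverage\<close>

lemma sets_rank_less:
  assumes "u \<in> borel_measurable Pm" "finite I" "j \<in> I"
  shows "{D \<in> space (\<Pi>\<^sub>M i\<in>I. Pm). count_less (u \<circ> D) I (u (D j)) < k} \<in> sets (\<Pi>\<^sub>M i\<in>I. Pm)"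
  using assms by (intro predE pred_count_less) auto

lemma prob_rank_less_eq:
  fixes Pm :: "'a measure" and u :: "'a \<Rightarrow> real"
  assumes Pm: "prob_space Pm" and u: "u \<in> borel_measurable Pm" and I: "finite I" "i \<in> I" "j \<in> I"
  defines "L \<equiv> \<Pi>\<^sub>M n\<in>I. Pm"
  shows "measure L {D \<in> space L. count_less (u \<circ> D) I (u (D i)) < k}
    = measure L {D \<in> space L. count_less (u \<circ> D) I (u (D j)) < k}"
proof -
  define \<tau> where "\<tau> = Transposition.transpose i j"
  define t where "t D = (\<lambda>n\<in>I. D (\<tau> n))" for D :: "'b \<Rightarrow> 'a"
  have \<tau>: "bij_betw \<tau> I I"
    using I by (simp add: \<tau>_def)
  then have t: "t \<in> measurable L L"
    unfolding t_def L_def by (intro measurable_restrict measurable_component_singleton) (auto dest: bij_betwE)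
  have "distr L L t = L"
    unfolding t_def L_def using distr_PiM_reindex[of I "\<lambda>_. Pm" \<tau> I] Pm \<tau> by (auto simp: bij_betw_def)
  moreover have "t -` {D \<in> space L. count_less (u \<circ> D) I (u (D j)) < k} \<inter> space L
      = {D \<in> space L. count_less (u \<circ> D) I (u (D i)) < k}"
  proof -
    have "count_less (u \<circ> t D) I r = count_less (u \<circ> D) I r" for D r
    proof -
      have "count_less (u \<circ> t D) I r = count_less (u \<circ> D \<circ> \<tau>) I r"
        unfolding count_less_def t_def by (intro arg_cong[where f = card]) auto
      then show ?thesis
        using count_less_comp_bij[OF \<tau>, of "u \<circ> D"] by (simp add: comp_assoc)
    qed
    moreover have "t D j = D i" for D
      using I by (simp add: t_def \<tau>_def)
    ultimately show ?thesis
      using measurable_space[OF t] by auto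
  qed
  ultimately show ?thesis
    using measure_distr[OF t sets_rank_less[OF u I(1,3), folded L_def]] by simp
qed

lemma prob_rank_less_ge:
  fixes Pm :: "'a measure" and u :: "'a \<Rightarrow> real"
  assumes Pm: "prob_space Pm" and u: "u \<in> borel_measurable Pm"
    and I: "finite I" "j \<in> I" and k: "k \<le> card I"
  defines "L \<equiv> \<Pi>\<^sub>M n\<in>I. Pm"
  shows "real k / real (card I) \<le> measure L {D \<in> space L. count_less (u \<circ> D) I (u (D j)) < k}"
proof -
  interpret L: prob_space L
    unfolding L_def using Pm by (intro prob_space_PiM)
  define E where "E i = {D \<in> space L. count_less (u \<circ> D) I (u (D i)) < k}" for i
  have E: "E i \<in> L.events" if "i \<in> I" for i
    unfolding E_def L_def using u I(1) that by (rule sets_rank_less)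
  have "real k \<le> (\<Sum>i\<in>I. indicator (E i) D)" if "D \<in> space L" for D
  proof -
    have "(\<Sum>i\<in>I. indicator (E i) D) = real (card {i \<in> I. count_less (u \<circ> D) I ((u \<circ> D) i) < k})"
      using that I(1) by (simp add: E_def indicator_def of_bool_def[symmetric] Int_def conj_commute)
    then show ?thesis
      using card_count_less_rank_ge[OF I(1) k, of "u \<circ> D"] by simp
  qed
  then have "(\<integral>D. real k \<partial>L) \<le> (\<integral>D. (\<Sum>i\<in>I. indicator (E i) D) \<partial>L)"
    using E by (intro integral_mono) (auto simp: L.emeasure_eq_measure)
  also have "\<dots> = (\<Sum>i\<in>I. measure L (E i))"
    using E by (simp add: L.emeasure_eq_measure)
  also have "\<dots> = real (card I) * measure L (E j)"
    using prob_rank_less_eq[OF Pm u I(1) _ I(2)] by (simp add: E_def L_def)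
  finally have "real k \<le> real (card I) * measure L (E j)"
    by (simp add: L.prob_space)
  moreover have "0 < card I"
    using I by (auto simp: card_gt_0_iff)
  ultimately show ?thesis
    by (simp add: E_def field_simps)
qed

lemma prob_test_rank_less_ge:
  fixes Pm :: "'a measure" and u :: "'a \<Rightarrow> real"
  assumes Pm: "prob_space Pm" and u: "u \<in> borel_measurable Pm" and k: "k \<le> Suc N"
  defines "W \<equiv> (\<Pi>\<^sub>M i\<in>{..<N}. Pm) \<Otimes>\<^sub>M Pm"
  shows "real k / real (Suc N) \<le> measure W {(D, z) \<in> space W. count_less (u \<circ> D) {..<N} (u z) < k}"
proof -
  interpret Pm: prob_space Pm by fact
  interpret M: prob_space "\<Pi>\<^sub>M i\<in>{..<N}. Pm"
    using Pm by (intro prob_space_PiM)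
  interpret pair_prob_space "\<Pi>\<^sub>M i\<in>{..<N}. Pm" Pm ..
  define L where "L = (\<Pi>\<^sub>M i\<in>insert N {..<N}. Pm)"
  define h :: "(nat \<Rightarrow> 'a) \<times> 'a \<Rightarrow> nat \<Rightarrow> 'a" where "h = (\<lambda>(D, z). D(N := z))"
  have h: "h \<in> measurable W L"
    unfolding h_def W_def L_def by (rule measurable_add_dim)
  have swap: "(\<lambda>(z, D). (D, z)) \<in> measurable (Pm \<Otimes>\<^sub>M (\<Pi>\<^sub>M i\<in>{..<N}. Pm)) W"
    unfolding W_def by measurable
  \<comment> \<open>the test point joins the calibration sample as its \<open>N\<close>-th member\<close>
  have "distr W L h = distr (distr (Pm \<Otimes>\<^sub>M (\<Pi>\<^sub>M i\<in>{..<N}. Pm)) W (\<lambda>(z, D). (D, z))) L h"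
    unfolding W_def by (simp flip: distr_pair_swap)
  also have "\<dots> = distr (Pm \<Otimes>\<^sub>M (\<Pi>\<^sub>M i\<in>{..<N}. Pm)) L (\<lambda>(z, D). D(N := z))"
    using distr_distr[OF h swap] by (simp add: h_def comp_def split_beta')
  also have "\<dots> = L"
    unfolding L_def using Pm by (intro distr_pair_PiM_eq_PiM) auto
  finally have distr_h: "distr W L h = L" .
  have "h -` {D \<in> space L. count_less (u \<circ> D) (insert N {..<N}) (u (D N)) < k} \<inter> space W
      = {(D, z) \<in> space W. count_less (u \<circ> D) {..<N} (u z) < k}"
  proof -
    have "count_less (u \<circ> h (D, z)) (insert N {..<N}) (u z) = count_less (u \<circ> D) {..<N} (u z)" for D z
      unfolding count_less_def h_def by (intro arg_cong[where f = card]) auto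
    then show ?thesis
      using measurable_space[OF h] by (auto simp: h_def)
  qed
  then have "measure W {(D, z) \<in> space W. count_less (u \<circ> D) {..<N} (u z) < k}
      = measure L {D \<in> space L. count_less (u \<circ> D) (insert N {..<N}) (u (D N)) < k}"
    using measure_distr[OF h sets_rank_less[OF u, of "insert N {..<N}" N, folded L_def]] distr_h by simp
  moreover have "real k / real (Suc N) \<le> measure L {D \<in> space L. count_less (u \<circ> D) (insert N {..<N}) (u (D N)) < k}"
    using prob_rank_less_ge[OF Pm u, of "insert N {..<N}" N k] k unfolding L_def by simp
  ultimately show ?thesis
    by simp
qed

lemma split_conformal_coverage:
  fixes \<pi> :: "('a \<times> 'b) measure" and s :: "'a \<times> 'b \<Rightarrow> real"
    and N :: nat
  assumes \<pi>: "prob_space \<pi>" and s: "s \<in> borel_measurable \<pi>" and \<alpha>: "0 \<le> \<alpha>"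
  defines "W \<equiv> (\<Pi>\<^sub>M i\<in>{..<N}. \<pi>) \<Otimes>\<^sub>M \<pi>"
  shows "1 - \<alpha> \<le> measure W {(D, z) \<in> space W. ereal (s z) \<le> conf_qhat s \<alpha> N D}"
proof -
  define k where "k = conf_rank \<alpha> N"
  have "(1 - \<alpha>) * (real N + 1) \<le> real k"
    unfolding k_def conf_rank_def by (rule of_nat_ceiling)
  then have "1 - \<alpha> \<le> real k / real (Suc N)"
    by (simp add: field_simps)
  also have "\<dots> \<le> measure W {(D, z) \<in> space W. count_less (s \<circ> D) {..<N} (s z) < k}"
  proof -
    have "(1 - \<alpha>) * (real N + 1) \<le> real (Suc N)"
      using mult_nonneg_nonneg[OF \<alpha>, of "real N"] \<alpha> by (simp add: algebra_simps)
    then have "\<lceil>(1 - \<alpha>) * (real N + 1)\<rceil> \<le> int (Suc N)"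
      by (simp only: ceiling_le_iff of_int_of_nat_eq)
    then have "k \<le> Suc N"
      unfolding k_def conf_rank_def by (simp add: nat_le_iff)
    then show ?thesis
      unfolding W_def using \<pi> s by (rule prob_test_rank_less_ge[rotated -1])
  qed
  also have "\<dots> = measure W {(D, z) \<in> space W. ereal (s z) \<le> conf_qhat s \<alpha> N D}"
    by (simp add: le_conf_qhat_iff k_def)
  finally show ?thesis .
qed

lemma sets_conformal_coverage_event:
  assumes X: "X \<in> measurable \<pi> S" and s: "s \<in> borel_measurable \<pi>" and A: "A \<in> sets S"
  shows "{(D, z) \<in> space ((\<Pi>\<^sub>M i\<in>{..<N}. \<pi>) \<Otimes>\<^sub>M \<pi>). X z \<in> A \<and> ereal (s z) \<le> conf_qhat s \<alpha> N D}
    \<in> sets ((\<Pi>\<^sub>M i\<in>{..<N}. \<pi>) \<Otimes>\<^sub>M \<pi>)"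
proof -
  have "Measurable.pred ((\<Pi>\<^sub>M i\<in>{..<N}. \<pi>) \<Otimes>\<^sub>M \<pi>) (\<lambda>w. count_less (s \<circ> fst w) {..<N} (s (snd w)) < conf_rank \<alpha> N)"
    using s by (intro pred_count_less) (auto simp: comp_def)
  then have "{w \<in> space ((\<Pi>\<^sub>M i\<in>{..<N}. \<pi>) \<Otimes>\<^sub>M \<pi>). X (snd w) \<in> A \<and> count_less (s \<circ> fst w) {..<N} (s (snd w)) < conf_rank \<alpha> N}
      \<in> sets ((\<Pi>\<^sub>M i\<in>{..<N}. \<pi>) \<Otimes>\<^sub>M \<pi>)"
    using X A by measurable
  then show ?thesis
    by (simp add: le_conf_qhat_iff split_beta')
qed

lemma (in pair_prob_space) measure_pair_measure_eq_integral:
  assumes A: "A \<in> sets (M1 \<Otimes>\<^sub>M M2)"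
  shows "integrable M1 (\<lambda>x. measure M2 (Pair x -` A))"
    and "measure (M1 \<Otimes>\<^sub>M M2) A = (\<integral>x. measure M2 (Pair x -` A) \<partial>M1)"
proof -
  have "(\<lambda>x. measure M2 (Pair x -` A)) \<in> borel_measurable M1"
    unfolding measure_def using A by (intro borel_measurable_enn2real M2.measurable_emeasure_Pair)
  then show int: "integrable M1 (\<lambda>x. measure M2 (Pair x -` A))"
    by (intro M1.integrable_const_bound[where B = 1]) auto
  have "emeasure (M1 \<Otimes>\<^sub>M M2) A = (\<integral>\<^sup>+x. ennreal (measure M2 (Pair x -` A)) \<partial>M1)"
    using A by (simp add: M2.emeasure_pair_measure_alt M2.emeasure_eq_measure)
  also have "\<dots> = ennreal (\<integral>x. measure M2 (Pair x -` A) \<partial>M1)"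
    using int by (intro nn_integral_eq_integral) auto
  finally show "measure (M1 \<Otimes>\<^sub>M M2) A = (\<integral>x. measure M2 (Pair x -` A) \<partial>M1)"
    by (simp add: measure_def)
qed

lemma (in pair_prob_space) measure_pair_measure_affine_le:
  assumes A: "A \<in> sets (M1 \<Otimes>\<^sub>M M2)" and B: "B \<in> sets (M1 \<Otimes>\<^sub>M M2)"
    and slices: "\<And>x. x \<in> space M1 \<Longrightarrow> c * measure M2 (Pair x -` A) - d \<le> measure M2 (Pair x -` B)"
  shows "c * measure (M1 \<Otimes>\<^sub>M M2) A - d \<le> measure (M1 \<Otimes>\<^sub>M M2) B"
proof -
  have "(\<integral>x. c * measure M2 (Pair x -` A) - d \<partial>M1) \<le> (\<integral>x. measure M2 (Pair x -` B) \<partial>M1)"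
    using slices measure_pair_measure_eq_integral(1) A B by (intro integral_mono) auto
  then show ?thesis
    using measure_pair_measure_eq_integral A B by (simp add: M1.prob_space)
qed

lemma split_conformal_coverage_inter_ge:
  fixes \<pi> :: "('a \<times> 'b) measure" and s :: "'a \<times> 'b \<Rightarrow> real" and X :: "'a \<times> 'b \<Rightarrow> 'c"
    and N :: nat
  assumes \<pi>: "prob_space \<pi>" and X: "X \<in> measurable \<pi> S" and s: "s \<in> borel_measurable \<pi>"
    and \<alpha>: "0 \<le> \<alpha>"
    and ac: "absolutely_continuous (distr \<pi> S X \<Otimes>\<^sub>M distr \<pi> borel s) (distr \<pi> (S \<Otimes>\<^sub>M borel) (\<lambda>z. (X z, s z)))"
    and int: "integrable (distr \<pi> (S \<Otimes>\<^sub>M borel) (\<lambda>z. (X z, s z)))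
      (entropy_density (exp 1) (distr \<pi> S X \<Otimes>\<^sub>M distr \<pi> borel s) (distr \<pi> (S \<Otimes>\<^sub>M borel) (\<lambda>z. (X z, s z))))"
    and A: "A \<in> sets S"
  defines "W \<equiv> (\<Pi>\<^sub>M i\<in>{..<N}. \<pi>) \<Otimes>\<^sub>M \<pi>"
  shows "measure \<pi> {z \<in> space \<pi>. X z \<in> A} * (1 - \<alpha>)
      - sqrt (1 - exp (- prob_space.mutual_information \<pi> (exp 1) S borel X s))
    \<le> measure W {(D, z) \<in> space W. X z \<in> A \<and> ereal (s z) \<le> conf_qhat s \<alpha> N D}"
proof -
  interpret \<pi>: prob_space \<pi> by fact
  interpret M: prob_space "\<Pi>\<^sub>M i\<in>{..<N}. \<pi>"
    using \<pi> by (intro prob_space_PiM)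
  interpret W: pair_prob_space "\<Pi>\<^sub>M i\<in>{..<N}. \<pi>" \<pi> ..
  define p \<delta> where "p = measure \<pi> {z \<in> space \<pi>. X z \<in> A}"
    and "\<delta> = sqrt (1 - exp (- \<pi>.mutual_information (exp 1) S borel X s))"
  define C where "C B = {(D, z) \<in> space W. X z \<in> B \<and> ereal (s z) \<le> conf_qhat s \<alpha> N D}" for B
  have C: "C B \<in> sets W" if "B \<in> sets S" for B
    unfolding C_def W_def using X s that by (rule sets_conformal_coverage_event)
  have slice: "Pair D -` C B = {z \<in> space \<pi>. X z \<in> B \<and> s z \<in> {r. ereal r \<le> conf_qhat s \<alpha> N D}}"
    if "D \<in> space (\<Pi>\<^sub>M i\<in>{..<N}. \<pi>)" for D B
    using that by (auto simp: C_def W_def space_pair_measure)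
  have "p * measure \<pi> (Pair D -` C (space S)) - \<delta> \<le> measure \<pi> (Pair D -` C A)"
    if "D \<in> space (\<Pi>\<^sub>M i\<in>{..<N}. \<pi>)" for D
  proof -
    have "{z \<in> space \<pi>. X z \<in> space S \<and> ereal (s z) \<le> conf_qhat s \<alpha> N D}
        = {z \<in> space \<pi>. ereal (s z) \<le> conf_qhat s \<alpha> N D}"
      using measurable_space[OF X] by auto
    then show ?thesis
      using \<pi>.abs_prob_inter_diff_le_mutual_information[OF X s ac int A, of "{r. ereal r \<le> conf_qhat s \<alpha> N D}"]
      by (simp add: slice[OF that] p_def \<delta>_def abs_le_iff)
  qed
  then have "p * measure W (C (space S)) - \<delta> \<le> measure W (C A)"
    using C A unfolding W_def by (intro W.measure_pair_measure_affine_le) auto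
  moreover have "p * (1 - \<alpha>) \<le> p * measure W (C (space S))"
  proof -
    have "C (space S) = {(D, z) \<in> space W. ereal (s z) \<le> conf_qhat s \<alpha> N D}"
      using measurable_space[OF X] by (auto simp: C_def W_def space_pair_measure)
    then have "1 - \<alpha> \<le> measure W (C (space S))"
      using split_conformal_coverage[OF \<pi> s \<alpha>] unfolding W_def by simp
    then show ?thesis
      by (intro mult_left_mono) (simp_all add: p_def)
  qed
  ultimately have "p * (1 - \<alpha>) - \<delta> \<le> measure W (C A)"
    by linarith
  then show ?thesis
    by (simp add: p_def \<delta>_def C_def)
qed

theorem theoremS2:
  fixes MX :: "'a measure" and MY :: "'b measure" and \<pi> :: "('a \<times> 'b) measure"
    and s :: "'a \<times> 'b \<Rightarrow> real" and N :: nat and \<alpha> :: real and \<omega> :: "'a set"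
  assumes prob: "prob_space \<pi>"
    and sets_pi: "sets \<pi> = sets (MX \<Otimes>\<^sub>M MY)"
    and s_meas: "s \<in> borel_measurable (MX \<Otimes>\<^sub>M MY)"
    and N: "N \<ge> 1"
    and \<alpha>: "0 \<le> \<alpha>" "\<alpha> \<le> 1"
    \<comment> \<open>MI_Xs < infinity: joint law of (X, s(X,y)) is absolutely continuous w.r.t.
        the product of marginals and the log-density is integrable\<close>
    and MI_ac: "absolutely_continuous (distr \<pi> MX fst \<Otimes>\<^sub>M distr \<pi> borel s)
                   (distr \<pi> (MX \<Otimes>\<^sub>M borel) (\<lambda>z. (fst z, s z)))"
    and MI_int: "integrable (distr \<pi> (MX \<Otimes>\<^sub>M borel) (\<lambda>z. (fst z, s z)))
                   (entropy_density (exp 1) (distr \<pi> MX fst \<Otimes>\<^sub>M distr \<pi> borel s)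
                      (distr \<pi> (MX \<Otimes>\<^sub>M borel) (\<lambda>z. (fst z, s z))))"
    and MI_pos: "0 < prob_space.mutual_information \<pi> (exp 1) MX borel fst s"
    and \<omega>: "\<omega> \<in> sets MX"
    and P\<omega>: "measure \<pi> (\<omega> \<times> space MY) > 0"
  shows
    "measure ((\<Pi>\<^sub>M i\<in>{..<N}. \<pi>) \<Otimes>\<^sub>M \<pi>)
        {(D, (x, y)) \<in> space ((\<Pi>\<^sub>M i\<in>{..<N}. \<pi>) \<Otimes>\<^sub>M \<pi>).
            x \<in> \<omega> \<and> y \<in> conf_set MY s \<alpha> N D x}
      / measure ((\<Pi>\<^sub>M i\<in>{..<N}. \<pi>) \<Otimes>\<^sub>M \<pi>)
        {(D, (x, y)) \<in> space ((\<Pi>\<^sub>M i\<in>{..<N}. \<pi>) \<Otimes>\<^sub>M \<pi>). x \<in> \<omega>}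
    \<ge> (1 - \<alpha>) - sqrt (1 - exp (- prob_space.mutual_information \<pi> (exp 1) MX borel fst s))
                    / measure \<pi> (\<omega> \<times> space MY)"
proof -
  interpret prob_space \<pi> by (rule prob)
  interpret M: prob_space "\<Pi>\<^sub>M i\<in>{..<N}. \<pi>"
    using prob by (intro prob_space_PiM)
  define W p \<delta> where "W = (\<Pi>\<^sub>M i\<in>{..<N}. \<pi>) \<Otimes>\<^sub>M \<pi>" and "p = measure \<pi> (\<omega> \<times> space MY)"
    and "\<delta> = sqrt (1 - exp (- mutual_information (exp 1) MX borel fst s))"
  have space_\<pi>: "space \<pi> = space MX \<times> space MY"
    using sets_eq_imp_space_eq[OF sets_pi] by (simp add: space_pair_measure)
  have fst: "fst \<in> measurable \<pi> MX" and s: "s \<in> borel_measurable \<pi>"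
    using s_meas by (simp_all add: measurable_cong_sets[OF sets_pi refl])
  have "{z \<in> space \<pi>. fst z \<in> \<omega>} = \<omega> \<times> space MY"
    using sets.sets_into_space[OF \<omega>] by (auto simp: space_\<pi>)
  then have "p * (1 - \<alpha>) - \<delta> \<le> measure W {(D, z) \<in> space W. fst z \<in> \<omega> \<and> ereal (s z) \<le> conf_qhat s \<alpha> N D}"
    using split_conformal_coverage_inter_ge[OF prob fst s \<alpha>(1) MI_ac MI_int \<omega>, of N]
    by (simp add: W_def p_def \<delta>_def)
  also have "{(D, z) \<in> space W. fst z \<in> \<omega> \<and> ereal (s z) \<le> conf_qhat s \<alpha> N D}
      = {(D, (x, y)) \<in> space W. x \<in> \<omega> \<and> y \<in> conf_set MY s \<alpha> N D x}"
    by (auto simp: conf_set_def W_def space_pair_measure space_\<pi>)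
  finally have num: "p * (1 - \<alpha>) - \<delta> \<le> measure W {(D, (x, y)) \<in> space W. x \<in> \<omega> \<and> y \<in> conf_set MY s \<alpha> N D x}" .
  have "{(D, (x, y)) \<in> space W. x \<in> \<omega>} = space (\<Pi>\<^sub>M i\<in>{..<N}. \<pi>) \<times> (\<omega> \<times> space MY)"
    using sets.sets_into_space[OF \<omega>] by (auto simp: W_def space_pair_measure space_\<pi>)
  then have den: "measure W {(D, (x, y)) \<in> space W. x \<in> \<omega>} = p"
    using \<omega> sets_pi by (simp add: W_def p_def measure_def emeasure_pair_measure_Times M.emeasure_space_1)
  have "(1 - \<alpha>) - \<delta> / p = (p * (1 - \<alpha>) - \<delta>) / p"
    using P\<omega> by (simp add: p_def field_simps)
  also have "\<dots> \<le> measure W {(D, (x, y)) \<in> space W. x \<in> \<omega> \<and> y \<in> conf_set MY s \<alpha> N D x} / p"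
    using num P\<omega> by (intro divide_right_mono) (simp_all add: p_def)
  finally show ?thesis
    using den unfolding W_def p_def \<delta>_def by simp
qed

end
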